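(* For every $\mathrm{F}_H$ type $T$ and term $e$, $T \parallel \mathit{self}(T, e)$.
   Context: Syntax of $\mathrm{F}_H$: types $T ::= B \mid \alpha \mid x{:}T_1\to T_2 \mid \forall\alpha.T \mid \{x{:}T\mid e\}$ where $B$ ranges over base types (each with an equality operation $=_B$); values include casts $\langle T_1\Rightarrow T_2\rangle^\ell$ ($\ell$ a blame label); terms include variables, term application $e_1\,e_2$, type application $e\,T$, and $\mathsf{let}\ x{:}T=e_1\ \mathsf{in}\ e_2$ abbreviates $(\lambda x{:}T.e_2)\,e_1$. Type compatibility $T_1\parallel T_2$ is the least relation with: $B\parallel B$; $\alpha\parallel\alpha$; $\{x{:}T_1\mid e\}\parallel T_2$ if $T_1\parallel T_2$; $T_1\parallel\{x{:}T_2\mid e\}$ if $T_1\parallel T_2$; $x{:}T_{11}\to T_{12}\parallel x{:}T_{21}\to T_{22}$ if $T_{11}\parallel T_{21}$ and $T_{12}\parallel T_{22}$; $\forall\alpha.T_1\parallel\forall\alpha.T_2$ if $T_1\parallel T_2$. Selfification: $\mathit{self}(B,e)=\{x{:}B\mid x=_B e\}$ ($x\notin\mathrm{FV}(e)$); $\mathit{self}(\alpha,e)=\alpha$; $\mathit{self}(x{:}T_1\to T_2,e)=x{:}T_1\to\mathit{self}(T_2,e\,x)$ ($x\notin\mathrm{FV}(e)$); $\mathit{self}(\forall\alpha.T,e)=\forall\alpha.\mathit{self}(T,e\,\alpha)$ ($\alpha\notin\mathrm{FTV}(e)$); $\mathit{self}(\{x{:}T'\mid e'\},e)=\{x{:}T''\mid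 \mathsf{let}\ x{:}T'=\langle T''\Rightarrow T'\rangle^\ell x\ \mathsf{in}\ e'\}$ where $T''=\mathit{self}(T',\langle\{x{:}T'\mid e'\}\Rightarrow T'\rangle^\ell e)$ ($x\notin\mathrm{FV}(e)$; $\ell$ an arbitrary label). *)

theory Defs
  imports Main
begin

text \<open>Syntax of F_H in de Bruijn representation (term variables and type
variables are separate index spaces).  Binders: TArr binds a term variable in
its codomain, TRef binds a term variable in its predicate, Lam binds a term
variable in its body, TAll and TLam bind a type variable.
'b = base types, 'k = constants, 'l = blame labels.\<close>

datatype ('b, 'k, 'l) ty =
    TBase 'b
  | TVar nat
  | TArr "('b, 'k, 'l) ty" "('b, 'k, 'l) ty"
  | TAll "('b, 'k, 'l) ty"
  | TRef "('b, 'k, 'l) ty" "('b, 'k, 'l) tm"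
and ('b, 'k, 'l) tm =
    Var nat
  | Const 'k
  | Eq 'b "('b, 'k, 'l) tm" "('b, 'k, 'l) tm"
  | Lam "('b, 'k, 'l) ty" "('b, 'k, 'l) tm"
  | App "('b, 'k, 'l) tm" "('b, 'k, 'l) tm"
  | TLam "('b, 'k, 'l) tm"
  | TApp "('b, 'k, 'l) tm" "('b, 'k, 'l) ty"
  | Cast "('b, 'k, 'l) ty" "('b, 'k, 'l) ty" 'l
  | Check "('b, 'k, 'l) ty" "('b, 'k, 'l) tm" "('b, 'k, 'l) tm" 'l
  | Blame 'l

primrec lift_ty :: "nat \<Rightarrow> ('b, 'k, 'l) ty \<Rightarrow> ('b, 'k, 'l) ty"
  and lift_tm :: "nat \<Rightarrow> ('b, 'k, 'l) tm \<Rightarrow> ('b, 'k, 'l) tm" where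
  "lift_ty c (TBase B) = TBase B"
| "lift_ty c (TVar a) = TVar a"
| "lift_ty c (TArr T1 T2) = TArr (lift_ty c T1) (lift_ty (Suc c) T2)"
| "lift_ty c (TAll T) = TAll (lift_ty c T)"
| "lift_ty c (TRef T e) = TRef (lift_ty c T) (lift_tm (Suc c) e)"
| "lift_tm c (Var n) = Var (if n < c then n else Suc n)"
| "lift_tm c (Const k) = Const k"
| "lift_tm c (Eq B e1 e2) = Eq B (lift_tm c e1) (lift_tm c e2)"
| "lift_tm c (Lam T e) = Lam (lift_ty c T) (lift_tm (Suc c) e)"
| "lift_tm c (App e1 e2) = App (lift_tm c e1) (lift_tm c e2)"
| "lift_tm c (TLam e) = TLam (lift_tm c e)"
| "lift_tm c (TApp e T) = TApp (lift_tm c e) (lift_ty c T)"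
| "lift_tm c (Cast T1 T2 l) = Cast (lift_ty c T1) (lift_ty c T2) l"
| "lift_tm c (Check T e1 e2 l) = Check (lift_ty c T) (lift_tm c e1) (lift_tm c e2) l"
| "lift_tm c (Blame l) = Blame l"

primrec tlift_ty :: "nat \<Rightarrow> ('b, 'k, 'l) ty \<Rightarrow> ('b, 'k, 'l) ty"
  and tlift_tm :: "nat \<Rightarrow> ('b, 'k, 'l) tm \<Rightarrow> ('b, 'k, 'l) tm" where
  "tlift_ty c (TBase B) = TBase B"
| "tlift_ty c (TVar a) = TVar (if a < c then a else Suc a)"
| "tlift_ty c (TArr T1 T2) = TArr (tlift_ty c T1) (tlift_ty c T2)"
| "tlift_ty c (TAll T) = TAll (tlift_ty (Suc c) T)"
| "tlift_ty c (TRef T e) = TRef (tlift_ty c T) (tlift_tm c e)"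
| "tlift_tm c (Var n) = Var n"
| "tlift_tm c (Const k) = Const k"
| "tlift_tm c (Eq B e1 e2) = Eq B (tlift_tm c e1) (tlift_tm c e2)"
| "tlift_tm c (Lam T e) = Lam (tlift_ty c T) (tlift_tm c e)"
| "tlift_tm c (App e1 e2) = App (tlift_tm c e1) (tlift_tm c e2)"
| "tlift_tm c (TLam e) = TLam (tlift_tm (Suc c) e)"
| "tlift_tm c (TApp e T) = TApp (tlift_tm c e) (tlift_ty c T)"
| "tlift_tm c (Cast T1 T2 l) = Cast (tlift_ty c T1) (tlift_ty c T2) l"
| "tlift_tm c (Check T e1 e2 l) = Check (tlift_ty c T) (tlift_tm c e1) (tlift_tm c e2) l"
| "tlift_tm c (Blame l) = Blame l"

definition Let_tm :: "('b, 'k, 'l) ty \<Rightarrow> ('b, 'k, 'l) tm \<Rightarrow> ('b, 'k, 'l) tm \<Rightarrow> ('b, 'k, 'l) tm" where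
  "Let_tm T e1 e2 = App (Lam T e2) e1"

inductive compat :: "('b, 'k, 'l) ty \<Rightarrow> ('b, 'k, 'l) ty \<Rightarrow> bool" where
  compat_base: "compat (TBase B) (TBase B)"
| compat_var: "compat (TVar a) (TVar a)"
| compat_refl: "compat T1 T2 \<Longrightarrow> compat (TRef T1 e) T2"
| compat_refr: "compat T1 T2 \<Longrightarrow> compat T1 (TRef T2 e)"
| compat_arr: "compat T11 T21 \<Longrightarrow> compat T12 T22 \<Longrightarrow> compat (TArr T11 T12) (TArr T21 T22)"
| compat_all: "compat T1 T2 \<Longrightarrow> compat (TAll T1) (TAll T2)"

text \<open>Selfification self(T, e), with the (arbitrary) blame label l used in the
refinement case.  The freshness side conditions of the paper are automatic in
de Bruijn form: e is lifted when moved under a binder.\<close>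
primrec self :: "'l \<Rightarrow> ('b, 'k, 'l) ty \<Rightarrow> ('b, 'k, 'l) tm \<Rightarrow> ('b, 'k, 'l) ty" where
  "self l (TBase B) e = TRef (TBase B) (Eq B (Var 0) (lift_tm 0 e))"
| "self l (TVar a) e = TVar a"
| "self l (TArr T1 T2) e = TArr T1 (self l T2 (App (lift_tm 0 e) (Var 0)))"
| "self l (TAll T) e = TAll (self l T (TApp (tlift_tm 0 e) (TVar 0)))"
| "self l (TRef T' e') e =
     (let T'' = self l T' (App (Cast (TRef T' e') T' l) e)
      in TRef T'' (Let_tm (lift_ty 0 T') (App (Cast (lift_ty 0 T'') (lift_ty 0 T') l) (Var 0))
                          (lift_tm 1 e')))"

end

theory Submission
  imports Defs
begin

text \<open>Induction on \<open>T\<close>, generalizing \<open>e\<close>: selfification keeps the shape of a type,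
only wrapping base types (and the inner type of a refinement) in refinements and
leaving domains of arrows untouched; the latter is where reflexivity of \<open>\<parallel>\<close> is needed.\<close>

lemma compat_reflexive: "compat T T"
  by (induction T rule: ty.induct[of _ "\<lambda>_. True"]) (auto intro: compat.intros)

theorem mainTheorem10:
  fixes T :: "('b, 'k, 'l) ty" and e :: "('b, 'k, 'l) tm" and l :: 'l
  shows "compat T (self l T e)"
proof (induction T arbitrary: e rule: ty.induct[of _ "\<lambda>_. True"])
  case (TBase B)
  show ?case by (simp add: compat_refr compat_base)
next
  case (TVar a)
  show ?case by (simp add: compat_var)
next
  case (TArr T1 T2)
  show ?case by (simp add: compat_arr compat_reflexive TArr.IH)
next
  case (TAll T)
  show ?case by (simp add: compat_all TAll.IH)
next
  case (TRef T e')
  show ?case by (simp add: Let_def compat_refl compat_refr TRef.IH)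
qed simp_all

end
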